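(* Let $q$ be an odd prime power with $q\equiv2\pmod 3$, let $m,n$ be positive integers, let $\omega\in\mathbb{F}_{q^2}$ be an element of multiplicative order $3$, and let $\varepsilon\in\mathbb{F}_q^*\cup\{\pm\omega,\pm\omega^2\}$. Then $$f(x)=(x+x^q)^m+\varepsilon(x-\omega x^q)^n$$ is a permutation polynomial of $\mathbb{F}_{q^2}$ if and only if $\gcd(mn,q-1)=1$.
   Context: A polynomial is a permutation polynomial of $\mathbb{F}_{q^2}$ if the map it induces on $\mathbb{F}_{q^2}$ is bijective. *)

theory Defs
  imports "HOL-Computational_Algebra.Primes" "HOL-Library.Cardinality"
begin

definition prime_power :: "nat \<Rightarrow> bool" where
  "prime_power q \<longleftrightarrow> (\<exists>p k. prime p \<and> k \<ge> 1 \<and> q = p ^ k)"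

definition has_mult_order :: "'a::field \<Rightarrow> nat \<Rightarrow> bool" where
  "has_mult_order w n \<longleftrightarrow> w \<noteq> 0 \<and> n > 0 \<and> w ^ n = 1 \<and> (\<forall>k. 0 < k \<and> k < n \<longrightarrow> w ^ k \<noteq> 1)"

definition subfield_Fq :: "nat \<Rightarrow> 'a::field set" where
  "subfield_Fq q = {x. x ^ q = x}"

definition permutation_polynomial :: "('a \<Rightarrow> 'a) \<Rightarrow> bool" where
  "permutation_polynomial f \<longleftrightarrow> bij f"

end

theory Submission
  imports Defs "HOL-Number_Theory.Residues" "HOL-Computational_Algebra.Polynomial"
begin

(* Write T_c = twisted_trace q c, i.e. T_c(x) = x + c x^q, so that f = T_1^m + \<epsilon> T_{-\<omega>}^n.
   When c^(q+1) = 1, T_c is F_q-linear and maps into the Frobenius eigenspace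
   {y. y^q = c^q y}, which has at most q elements; and x is determined by (T_1 x, T_{-\<omega>} x).
   If a prime r divides gcd(mn, q - 1), take z in F_q of order r and a nonzero x in the kernel
   of T_{-\<omega>} (if r divides m) or of T_1 (if r divides n): then f(zx) = f(x).
   Conversely, if f(x) = f(y) then A = T_1(x)^m - T_1(y)^m lies in F_q and equals \<epsilon> C, where
   C = T_{-\<omega>}(y)^n - T_{-\<omega>}(x)^n satisfies C^q = (-\<omega>^2)^n C. Comparing A^q with
   (\<epsilon> C)^q forces C = 0, because \<epsilon>^q (-\<omega>^2)^n \<noteq> \<epsilon> for the admissible \<epsilon> and odd n.
   Finally, m and n being prime to q - 1 makes m-th and n-th powers injective on the
   eigenspaces. *)

lemma prime_CHAR_finite_field: "prime CHAR('a::{field,finite})"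
  by (intro prime_CHAR_semidom finite_imp_CHAR_pos) simp

lemma power_card_minus_one_eq_one:
  fixes x :: "'a::{field,finite}"
  assumes "x \<noteq> 0"
  shows "x ^ (CARD('a) - 1) = 1"
proof -
  let ?U = "UNIV - {0::'a}"
  have "x ^ card ?U * \<Prod>?U = (\<Prod>y\<in>?U. x * y)"
    by (simp add: prod.distrib)
  also have "\<dots> = \<Prod>?U"
    by (rule prod.reindex_bij_witness[of _ "\<lambda>y. y / x" "\<lambda>y. x * y"])
      (use assms in auto)
  finally show ?thesis
    by (simp add: card_Diff_subset)
qed

lemma power_card_eq_self:
  fixes x :: "'a::{field,finite}"
  shows "x ^ CARD('a) = x"
proof (cases "x = 0")
  case False
  have "CARD('a) = Suc (CARD('a) - 1)"
    using finite_UNIV_card_ge_0[where ?'a = 'a] by simp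
  then show ?thesis
    using power_card_minus_one_eq_one[OF False] by (metis power_Suc mult_1_right)
qed (simp add: finite_UNIV_card_ge_0)

lemma CHAR_eq_if_card_eq_prime_power:
  assumes "prime p" and "CARD('a::{field,finite}) = p ^ k"
  shows "CHAR('a) = p"
proof -
  have "CHAR('a) dvd p ^ k"
    using CHAR_dvd_CARD[where ?'a = 'a] assms(2) by simp
  then show ?thesis
    using assms(1) prime_CHAR_finite_field[where ?'a = 'a]
    by (metis prime_dvd_power primes_dvd_imp_eq)
qed

lemma frobenius_add:
  fixes x y :: "'a::{field,finite}"
  assumes "prime_power q" and "CARD('a) = q ^ k"
  shows "(x + y) ^ q = x ^ q + y ^ q"
proof -
  obtain p j where "prime p" and q: "q = p ^ j"
    using assms(1) unfolding prime_power_def by blast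
  then have "CHAR('a) = p"
    using assms(2) by (intro CHAR_eq_if_card_eq_prime_power[where k = "j * k"])
      (simp_all add: power_mult)
  then show ?thesis
    using \<open>prime p\<close> q by (intro freshmans_dream') simp_all
qed

lemma frobenius_diff:
  fixes x y :: "'a::{field,finite}"
  assumes "prime_power q" and "CARD('a) = q ^ k"
  shows "(x - y) ^ q = x ^ q - y ^ q"
  using frobenius_add[OF assms, of "x - y" y] by (simp add: algebra_simps)

lemma prime_power_ge_two:
  assumes "prime_power q"
  shows "2 \<le> q"
proof -
  obtain p k where "prime p" and "1 \<le> k" and "q = p ^ k"
    using assms unfolding prime_power_def by blast
  then show ?thesis
    using self_le_power[of p k] prime_ge_2_nat[of p] by simp
qed

lemma two_neq_zero_if_odd_card:
  assumes "odd CARD('a::{field,finite})"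
  shows "(2::'a) \<noteq> 0"
proof
  assume "(2::'a) = 0"
  then have "CHAR('a) dvd 2"
    using of_nat_eq_0_iff_char_dvd[of 2, where ?'a = 'a] by simp
  then have "CHAR('a) = 2"
    using prime_CHAR_finite_field primes_dvd_imp_eq two_is_prime_nat by blast
  then show False
    using CHAR_dvd_CARD[where ?'a = 'a] assms by simp
qed

lemma card_roots_pow_eq_poly_le:
  fixes p :: "'a::field poly"
  assumes "degree p < N"
  shows "card {x. x ^ N = poly p x} \<le> N"
proof -
  define r where "r = monom 1 N - p"
  have "coeff r N = 1"
    using assms by (simp add: r_def coeff_eq_0)
  then have "r \<noteq> 0"
    by auto
  moreover have "degree r \<le> N"
    unfolding r_def using assms by (intro degree_diff_le) (simp_all add: degree_monom_le)
  moreover have "{x. x ^ N = poly p x} = {x. poly r x = 0}"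
    by (simp add: r_def poly_monom)
  ultimately show ?thesis
    using card_poly_roots_bound[of r] by simp
qed

lemma exists_root_of_unity_neq_one:
  assumes "1 < r" and "r dvd CARD('a::{field,finite}) - 1"
  shows "\<exists>z::'a. z \<noteq> 1 \<and> z ^ r = 1"
proof -
  obtain d where d: "CARD('a) - 1 = r * d"
    using assms(2) by blast
  have "card {0, 1::'a} \<le> CARD('a)"
    by (rule card_mono) simp_all
  then have "0 < d"
    using d by (cases "d = 0") auto
  then have "d < CARD('a) - 1"
    using d assms(1) by simp
  have "card {y::'a. y ^ d = poly [:1:] y} \<le> d"
    using \<open>0 < d\<close> by (intro card_roots_pow_eq_poly_le) simp
  have "\<exists>y::'a. y \<noteq> 0 \<and> y ^ d \<noteq> 1"
  proof (rule ccontr)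
    assume "\<nexists>y::'a. y \<noteq> 0 \<and> y ^ d \<noteq> 1"
    then have "card (UNIV - {0::'a}) \<le> card {y::'a. y ^ d = poly [:1:] y}"
      by (intro card_mono) auto
    with \<open>card _ \<le> d\<close> \<open>d < CARD('a) - 1\<close> show False
      by (simp add: card_Diff_subset)
  qed
  then obtain y :: 'a where "y \<noteq> 0" and "y ^ d \<noteq> 1"
    by blast
  moreover have "(y ^ d) ^ r = 1"
    using power_card_minus_one_eq_one[OF \<open>y \<noteq> 0\<close>] d
    by (simp add: power_mult mult.commute)
  ultimately show ?thesis
    by blast
qed

lemma exists_subfield_root_of_unity_neq_one:
  assumes "CARD('a::{field,finite}) = q ^ 2" and "1 < r" and "r dvd q - 1"
  shows "\<exists>z::'a. z \<noteq> 1 \<and> z ^ r = 1 \<and> z ^ q = z"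
proof -
  have "0 < q"
    using assms(1) finite_UNIV_card_ge_0[where ?'a = 'a] by (cases q) simp_all
  then have "CARD('a) - 1 = (q - 1) * (q + 1)"
    using assms(1) by (cases q) (simp_all add: power2_eq_square)
  then have "r dvd CARD('a) - 1"
    using assms(3) by simp
  then obtain z :: 'a where "z \<noteq> 1" and "z ^ r = 1"
    using exists_root_of_unity_neq_one assms(2) by blast
  have "z ^ (q - 1) = 1"
    using assms(3) \<open>z ^ r = 1\<close> by (auto elim!: dvdE simp: power_mult)
  then have "z ^ q = z"
    using \<open>0 < q\<close> by (metis Suc_diff_1 power_Suc mult_1_right)
  with \<open>z \<noteq> 1\<close> \<open>z ^ r = 1\<close> show ?thesis
    by blast
qed

lemma exists_nonzero_in_kernel:
  fixes g :: "'a::{ab_group_add,finite} \<Rightarrow> 'b::ab_group_add"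
  assumes "\<And>x y. g (x - y) = g x - g y" and "card (range g) < CARD('a)"
  shows "\<exists>x. x \<noteq> 0 \<and> g x = 0"
proof -
  have "\<not> inj g"
    using assms(2) card_image by fastforce
  then obtain x y where "x \<noteq> y" and "g x = g y"
    by (auto simp: inj_def)
  then show ?thesis
    using assms(1)[of x y] by (intro exI[of _ "x - y"]) simp
qed

lemma power_eq_one_if_coprime:
  fixes x :: "'a::monoid_mult"
  assumes "coprime k N" and "x ^ k = 1" and "x ^ N = 1"
  shows "x = 1"
proof (cases "k = 0")
  case True
  then show ?thesis
    using assms by simp
next
  case False
  then obtain s t where "k * s = N * t + 1"
    using bezout_nat[of k N] assms(1) by (auto simp: coprime_iff_gcd_eq_1)
  then have "x ^ (k * s) = x ^ (N * t) * x"
    by (metis power_add power_one_right)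
  then show ?thesis
    using assms(2,3) by (simp add: power_mult)
qed

lemma eigenvector_power_eq_imp_eq:
  fixes a b c :: "'a::field"
  assumes "a ^ q = c * a" and "b ^ q = c * b" and "a ^ k = b ^ k"
    and "0 < k" and "0 < q" and "coprime k (q - 1)"
  shows "a = b"
proof (cases "b = 0")
  case True
  then show ?thesis
    using assms(3,4) by (simp add: zero_power)
next
  case False
  then have "c \<noteq> 0"
    using assms(2,5) by auto
  define r where "r = a / b"
  have "r ^ k = 1"
    using assms(3) False by (simp add: r_def power_divide)
  then have "r \<noteq> 0"
    using assms(4) by (auto simp: zero_power)
  have "r * r ^ (q - 1) = r"
    using assms(1,2,5) False \<open>c \<noteq> 0\<close>
    by (simp add: r_def power_divide flip: power_Suc)
  then have "r ^ (q - 1) = 1"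
    using \<open>r \<noteq> 0\<close> by simp
  with \<open>r ^ k = 1\<close> have "r = 1"
    by (rule power_eq_one_if_coprime[OF assms(6)])
  then show ?thesis
    using False by (simp add: r_def)
qed

definition twisted_trace :: "nat \<Rightarrow> 'a::field \<Rightarrow> 'a \<Rightarrow> 'a" where
  "twisted_trace q c x = x + c * x ^ q"

lemma twisted_trace_diff:
  fixes x y :: "'a::{field,finite}"
  assumes "prime_power q" and "CARD('a) = q ^ k"
  shows "twisted_trace q c (x - y) = twisted_trace q c x - twisted_trace q c y"
  by (simp add: twisted_trace_def frobenius_diff[OF assms] algebra_simps)

lemma twisted_trace_mult:
  assumes "z ^ q = z"
  shows "twisted_trace q c (z * x) = z * twisted_trace q c x"
  using assms by (simp add: twisted_trace_def power_mult_distrib algebra_simps)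

lemma twisted_trace_power:
  fixes c x :: "'a::{field,finite}"
  assumes "prime_power q" and "CARD('a) = q ^ 2" and "c ^ (q + 1) = 1"
  shows "twisted_trace q c x ^ q = c ^ q * twisted_trace q c x"
proof -
  have "(x ^ q) ^ q = x"
    using power_card_eq_self[of x] assms(2) by (simp add: power2_eq_square power_mult)
  moreover have "c * c ^ q = 1"
    using assms(3) by simp
  ultimately show ?thesis
    by (simp add: twisted_trace_def frobenius_add[OF assms(1,2)] power_mult_distrib algebra_simps)
qed

lemma card_range_twisted_trace_less:
  fixes c :: "'a::{field,finite}"
  assumes "prime_power q" and "CARD('a) = q ^ 2" and "c ^ (q + 1) = 1"
  shows "card (range (twisted_trace q c)) < CARD('a)"
proof -
  have "2 \<le> q"
    using assms(1) by (rule prime_power_ge_two)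
  have "range (twisted_trace q c) \<subseteq> {y. y ^ q = poly [:0, c ^ q:] y}"
    using twisted_trace_power[OF assms] by auto
  then have "card (range (twisted_trace q c)) \<le> card {y::'a. y ^ q = poly [:0, c ^ q:] y}"
    by (intro card_mono) simp_all
  also have "\<dots> \<le> q"
    using \<open>2 \<le> q\<close> by (intro card_roots_pow_eq_poly_le)
      (simp add: degree_pCons_le order.strict_trans1)
  also have "q < CARD('a)"
    using \<open>2 \<le> q\<close> assms(2) by (simp add: power2_eq_square)
  finally show ?thesis .
qed

lemma twisted_trace_inj:
  fixes a b :: "'a::field"
  assumes "a \<noteq> b"
    and "twisted_trace q a x = twisted_trace q a y" and "twisted_trace q b x = twisted_trace q b y"
  shows "x = y"
proof -
  have "(b - a) * z = b * twisted_trace q a z - a * twisted_trace q b z" for z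
    by (simp add: twisted_trace_def algebra_simps)
  then have "(b - a) * x = (b - a) * y"
    using assms(2,3) by metis
  then show ?thesis
    using assms(1) by simp
qed

lemma eigenvector_diff_powers:
  fixes s t c :: "'a::{field,finite}"
  assumes "prime_power q" and "CARD('a) = q ^ k" and "s ^ q = c * s" and "t ^ q = c * t"
  shows "(s ^ j - t ^ j) ^ q = c ^ j * (s ^ j - t ^ j)"
proof -
  have "(u ^ j) ^ q = c ^ j * u ^ j" if "u ^ q = c * u" for u
  proof -
    have "(u ^ j) ^ q = (u ^ q) ^ j"
      by (metis power_mult mult.commute)
    then show ?thesis
      using that by (simp add: power_mult_distrib)
  qed
  then show ?thesis
    using assms(3,4)
    by (simp add: frobenius_diff[OF assms(1,2)] algebra_simps)
qed

lemma inj_imp_coprime: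
  fixes a b e :: "'a::{field,finite}"
  assumes "prime_power q" and "CARD('a) = q ^ 2"
    and "a ^ (q + 1) = 1" and "b ^ (q + 1) = 1" and "0 < m" and "0 < n"
    and inj: "inj (\<lambda>x. twisted_trace q a x ^ m + e * twisted_trace q b x ^ n)"
  shows "coprime (m * n) (q - 1)"
proof (rule ccontr)
  let ?f = "\<lambda>x. twisted_trace q a x ^ m + e * twisted_trace q b x ^ n"
  assume "\<not> coprime (m * n) (q - 1)"
  then obtain r where "prime r" and "r dvd gcd (m * n) (q - 1)"
    by (metis coprime_iff_gcd_eq_1 prime_factor_nat)
  then have "r dvd m * n" and "r dvd q - 1"
    by simp_all
  then obtain z :: 'a where "z \<noteq> 1" and "z ^ r = 1" and "z ^ q = z"
    using exists_subfield_root_of_unity_neq_one[OF assms(2)] prime_gt_1_nat[OF \<open>prime r\<close>]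
    by blast
  have kernel: "\<exists>x. x \<noteq> 0 \<and> twisted_trace q c x = 0" if "c ^ (q + 1) = 1" for c :: 'a
    using twisted_trace_diff[OF assms(1,2)] card_range_twisted_trace_less[OF assms(1,2) that]
    by (rule exists_nonzero_in_kernel)
  from \<open>r dvd m * n\<close> \<open>prime r\<close> consider "r dvd m" | "r dvd n"
    using prime_dvd_mult_iff by blast
  then obtain x where "x \<noteq> 0" and "?f (z * x) = ?f x"
  proof cases
    case 1
    then have "z ^ m = 1"
      using \<open>z ^ r = 1\<close> by (auto elim!: dvdE simp: power_mult)
    obtain x where "x \<noteq> 0" and "twisted_trace q b x = 0"
      using kernel[OF assms(4)] by blast
    with \<open>z ^ m = 1\<close> show thesis
      using that twisted_trace_mult[OF \<open>z ^ q = z\<close>] assms(6)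
      by (simp add: power_mult_distrib zero_power)
  next
    case 2
    then have "z ^ n = 1"
      using \<open>z ^ r = 1\<close> by (auto elim!: dvdE simp: power_mult)
    obtain x where "x \<noteq> 0" and "twisted_trace q a x = 0"
      using kernel[OF assms(3)] by blast
    with \<open>z ^ n = 1\<close> show thesis
      using that twisted_trace_mult[OF \<open>z ^ q = z\<close>] assms(5)
      by (simp add: power_mult_distrib zero_power)
  qed
  then have "z * x = x"
    using inj unfolding inj_def by blast
  with \<open>x \<noteq> 0\<close> \<open>z \<noteq> 1\<close> show False
    by simp
qed

lemma coprime_imp_inj:
  fixes a b e :: "'a::{field,finite}"
  assumes "prime_power q" and "CARD('a) = q ^ 2"
    and "a ^ (q + 1) = 1" and "b ^ (q + 1) = 1" and "a \<noteq> b"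
    and "coprime (m * n) (q - 1)" and "0 < m" and "0 < n"
    and "e ^ q * (b ^ q) ^ n \<noteq> e * (a ^ q) ^ m"
  shows "inj (\<lambda>x. twisted_trace q a x ^ m + e * twisted_trace q b x ^ n)"
proof (rule injI)
  fix x y
  let ?S = "twisted_trace q a" and ?T = "twisted_trace q b"
  assume "?S x ^ m + e * ?T x ^ n = ?S y ^ m + e * ?T y ^ n"
  have "coprime m (q - 1)" and "coprime n (q - 1)"
    using assms(6) by simp_all
  define A where "A = ?S x ^ m - ?S y ^ m"
  define C where "C = ?T y ^ n - ?T x ^ n"
  have "A = e * C"
    using \<open>?S x ^ m + _ = _\<close> by (simp add: A_def C_def algebra_simps)
  have "A ^ q = (a ^ q) ^ m * A"
    unfolding A_def
    by (intro eigenvector_diff_powers[OF assms(1,2)] twisted_trace_power[OF assms(1-3)])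
  have "C ^ q = (b ^ q) ^ n * C"
    unfolding C_def
    by (intro eigenvector_diff_powers[OF assms(1,2)] twisted_trace_power[OF assms(1,2,4)])
  have "(e ^ q * (b ^ q) ^ n) * C = (e * C) ^ q"
    using \<open>C ^ q = _\<close> by (simp add: power_mult_distrib)
  also have "\<dots> = (e * (a ^ q) ^ m) * C"
    using \<open>A = e * C\<close> \<open>A ^ q = _\<close> by simp
  finally have "C = 0"
    using assms(9) by simp
  then have "?T y ^ n = ?T x ^ n" and "?S x ^ m = ?S y ^ m"
    using \<open>A = e * C\<close> by (simp_all add: A_def C_def)
  have "0 < q"
    using prime_power_ge_two[OF assms(1)] by simp
  have "?S x = ?S y"
    using twisted_trace_power[OF assms(1-3)] twisted_trace_power[OF assms(1-3)]
      \<open>?S x ^ m = ?S y ^ m\<close> assms(7) \<open>0 < q\<close> \<open>coprime m (q - 1)\<close>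
    by (rule eigenvector_power_eq_imp_eq)
  moreover have "?T x = ?T y"
    using twisted_trace_power[OF assms(1,2,4)] twisted_trace_power[OF assms(1,2,4)]
      \<open>?T y ^ n = ?T x ^ n\<close>[symmetric] assms(8) \<open>0 < q\<close> \<open>coprime n (q - 1)\<close>
    by (rule eigenvector_power_eq_imp_eq)
  ultimately show "x = y"
    by (rule twisted_trace_inj[OF assms(5)])
qed

lemma cube_root_of_unity_uminus_power_neq:
  fixes w :: "'a::comm_ring_1"
  assumes "w ^ 3 = 1" and "(2::'a) \<noteq> 0"
  shows "- (w ^ i) \<noteq> w ^ j"
proof
  assume "- (w ^ i) = w ^ j"
  then have "w ^ (j + 2 * i) = - (w ^ i * w ^ (2 * i))"
    by (simp add: power_add flip: \<open>- (w ^ i) = w ^ j\<close>)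
  also have "\<dots> = - ((w ^ 3) ^ i)"
    by (simp flip: power_add power_mult)
  also have "\<dots> = -1"
    using assms(1) by simp
  finally have t: "w ^ (j + 2 * i) = -1" .
  have "(w ^ (j + 2 * i)) ^ 3 = 1"
    using assms(1) by (metis power_mult power_mult_distrib mult.commute power_one)
  then have "(1::'a) + 1 = 0"
    unfolding t by simp
  then show False
    using assms(2) by simp
qed

lemma uminus_cube_root_of_unity_power:
  fixes w :: "'a::field"
  assumes "w ^ 3 = 1" and "(2::'a) \<noteq> 0" and "odd q" and "q mod 3 = 2"
  shows "(- w) ^ q = - (w ^ 2)" and "(- w) ^ (q + 1) = 1" and "- w \<noteq> 1"
proof -
  have "w ^ q = (w ^ 3) ^ (q div 3) * w ^ 2"
    using assms(4) by (metis div_mult_mod_eq power_add power_mult mult.commute)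
  then show "(- w) ^ q = - (w ^ 2)"
    using assms(1,3) by simp
  then show "(- w) ^ (q + 1) = 1"
    using assms(1) by (simp add: power_Suc2 power3_eq_cube power2_eq_square mult.assoc)
  show "- w \<noteq> 1"
    using cube_root_of_unity_uminus_power_neq[OF assms(1,2), of 1 0] by simp
qed

lemma frobenius_of_admissible_coefficient:
  fixes w e :: "'a::field"
  assumes "odd q" and "e \<in> (subfield_Fq q - {0}) \<union> {w, -w, w ^ 2, -(w ^ 2)}"
  shows "\<exists>k. e ^ q = e * w ^ k"
proof (cases "e \<in> subfield_Fq q")
  case True
  then have "e ^ q = e * w ^ 0"
    by (simp add: subfield_Fq_def)
  then show ?thesis ..
next
  case False
  have twist: "\<exists>k. (s * w ^ j) ^ q = (s * w ^ j) * w ^ k" if "s ^ q = s" for s :: 'a and j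
  proof -
    have "j * q = j + j * (q - 1)"
      using assms(1) by (cases q) simp_all
    then have "(s * w ^ j) ^ q = (s * w ^ j) * w ^ (j * (q - 1))"
      using that by (simp add: power_mult_distrib power_add flip: power_mult)
    then show ?thesis ..
  qed
  have "(-1::'a) ^ q = -1"
    using assms(1) by simp
  with False show ?thesis
    using assms(2) twist[of 1 1] twist[of "-1" 1] twist[of 1 2] twist[of "-1" 2] by auto
qed

lemma frobenius_coefficient_neq:
  fixes w e :: "'a::field"
  assumes "w ^ 3 = 1" and "(2::'a) \<noteq> 0" and "odd q" and "odd n"
    and "e \<in> (subfield_Fq q - {0}) \<union> {w, -w, w ^ 2, -(w ^ 2)}"
  shows "e ^ q * (- (w ^ 2)) ^ n \<noteq> e"
proof
  obtain k where "e ^ q = e * w ^ k"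
    using frobenius_of_admissible_coefficient[OF assms(3,5)] ..
  have "e \<noteq> 0"
    using assms(1,5) by auto
  assume "e ^ q * (- (w ^ 2)) ^ n = e"
  moreover have "(- (w ^ 2)) ^ n = - (w ^ (2 * n))"
    using \<open>odd n\<close> by (simp add: power_mult)
  ultimately have "e * - (w ^ (k + 2 * n)) = e * 1"
    using \<open>e ^ q = _\<close> by (simp add: power_add mult.assoc)
  then have "- (w ^ (k + 2 * n)) = w ^ 0"
    using \<open>e \<noteq> 0\<close> by (subst (asm) mult_left_cancel) simp_all
  then show False
    using cube_root_of_unity_uminus_power_neq[OF assms(1,2)] by blast
qed

theorem proposition3p5:
  fixes q m n :: nat and \<omega> \<epsilon> :: "'a::{field,finite}"
  assumes "prime_power q" and "odd q" and "q mod 3 = 2"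
    and "CARD('a) = q ^ 2"
    and "m > 0" and "n > 0"
    and "has_mult_order \<omega> 3"
    and "\<epsilon> \<in> (subfield_Fq q - {0}) \<union> {\<omega>, -\<omega>, \<omega>^2, -(\<omega>^2)}"
  shows "permutation_polynomial (\<lambda>x::'a. (x + x ^ q) ^ m + \<epsilon> * (x - \<omega> * x ^ q) ^ n)
           \<longleftrightarrow> gcd (m * n) (q - 1) = 1"
proof -
  let ?f = "\<lambda>x. (x + x ^ q) ^ m + \<epsilon> * (x - \<omega> * x ^ q) ^ n"
  let ?g = "\<lambda>x. twisted_trace q 1 x ^ m + \<epsilon> * twisted_trace q (- \<omega>) x ^ n"
  have "(2::'a) \<noteq> 0"
    using assms(2,4) by (intro two_neq_zero_if_odd_card) simp
  have "\<omega> ^ 3 = 1"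
    using assms(7) by (simp add: has_mult_order_def)
  note \<omega>_power = uminus_cube_root_of_unity_power[OF this \<open>2 \<noteq> 0\<close> assms(2,3)]
  have "permutation_polynomial ?f \<longleftrightarrow> inj ?g"
    unfolding permutation_polynomial_def twisted_trace_def bij_def
    using finite_UNIV_inj_surj[of ?f] by auto
  also have "inj ?g \<longleftrightarrow> coprime (m * n) (q - 1)"
  proof
    assume "inj ?g"
    then show "coprime (m * n) (q - 1)"
      by (rule inj_imp_coprime[OF assms(1,4) power_one \<omega>_power(2) assms(5,6)])
  next
    assume "coprime (m * n) (q - 1)"
    then have "odd n"
      using assms(2) coprime_common_divisor[of "m * n" "q - 1" 2] by auto
    then have "\<epsilon> ^ q * ((- \<omega>) ^ q) ^ n \<noteq> \<epsilon> * (1 ^ q) ^ m"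
      using frobenius_coefficient_neq[OF \<open>\<omega> ^ 3 = 1\<close> \<open>2 \<noteq> 0\<close> assms(2) _ assms(8)]
        \<omega>_power(1) by simp
    with \<open>coprime (m * n) (q - 1)\<close> show "inj ?g"
      using assms(1,4,5,6) \<omega>_power(2,3)
      by (intro coprime_imp_inj) auto
  qed
  also have "\<dots> \<longleftrightarrow> gcd (m * n) (q - 1) = 1"
    by (rule coprime_iff_gcd_eq_1)
  finally show ?thesis .
qed

end
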